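(* Let $\lambda>0$, $L_x,L_y>0$, $K_x=L_x/\lambda$, $K_y=L_y/\lambda$, let $\alpha_1,\alpha_2\in[-1,1]$, let $C\neq 0$ be a complex constant, and let $P>0$, $\sigma^2>0$. Define, for $(\beta_1,\beta_2)\in[-1,1]^2$, $$H(\beta_1,\beta_2)=C\,\mathrm{sinc}\big(K_x\pi(\alpha_1-\beta_1)\big)\,\mathrm{sinc}\big(K_y\pi(\alpha_2-\beta_2)\big),\qquad \mu(\beta_1,\beta_2)=\big|\sqrt{P}\,H(\beta_1,\beta_2)\big|^2+\sigma^2 .$$ Let $(\beta_1^0,\beta_2^0)\in[-1,1]^2$ and let $v,w>0$ satisfy $K_xv\in\mathbb{N}$, $K_yw\in\mathbb{N}$, $|\beta_1^0\pm v|\le 1$ and $|\beta_2^0\pm w|\le 1$. Suppose the five values $\mu(\beta_1^0,\beta_2^0)$, $\mu(\beta_1^0+v,\beta_2^0)$, $\mu(\beta_1^0-v,\beta_2^0)$, $\mu(\beta_1^0,\beta_2^0+w)$, $\mu(\beta_1^0,\beta_2^0-w)$ are known. Define $$\alpha_1^{(1)/(2)}=\beta_1^0+\frac{v}{1\pm\sqrt{\left|\frac{\mu(\beta_1^0,\beta_2^0)-\sigma^2}{\mu(\beta_1^0+v,\beta_2^0)-\sigma^2}\right|}},\qquad \alpha_1^{(3)/(4)}=\beta_1^0-\frac{v}{1\pm\sqrt{\left|\frac{\mu(\beta_1^0,\beta_2^0)-\sigma^2}{\mu(\beta_1^0-v,\beta_2^0)-\sigma^2}\right|}},$$ $$\alpha_2^{(1)/(2)}=\beta_2^0+\frac{w}{1\pm\sqrt{\left|\frac{\mu(\beta_1^0,\beta_2^0)-\sigma^2}{\mu(\beta_1^0,\beta_2^0+w)-\sigma^2}\right|}},\qquad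 \alpha_2^{(3)/(4)}=\beta_2^0-\frac{w}{1\pm\sqrt{\left|\frac{\mu(\beta_1^0,\beta_2^0)-\sigma^2}{\mu(\beta_1^0,\beta_2^0-w)-\sigma^2}\right|}},$$ where the superscript $(1)$ (resp. $(3)$) corresponds to the sign $+$ and $(2)$ (resp. $(4)$) to the sign $-$ in the denominator. Then the maximizer $(\beta_1^*,\beta_2^* )=\arg\max_{(\beta_1,\beta_2)\in[-1,1]^2}\mu(\beta_1,\beta_2)$ is given by $$\beta_1^*=\frac{\alpha_1^{(i)}+\alpha_1^{(j)}}{2}\ \text{ where }(i,j)\in\{1,2\}\times\{3,4\}\text{ minimizes }|\alpha_1^{(i)}-\alpha_1^{(j)}|,$$ $$\beta_2^*=\frac{\alpha_2^{(i)}+\alpha_2^{(j)}}{2}\ \text{ where }(i,j)\in\{1,2\}\times\{3,4\}\text{ minimizes }|\alpha_2^{(i)}-\alpha_2^{(j)}|.$$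
   Context: $\mathrm{sinc}(x)=\sin(x)/x$ (with $\mathrm{sinc}(0)=1$) and $\mathbb{N}$ denotes the natural numbers. This models the far-field channel $H$ between a holographic metasurface transceiver of size $L_x\times L_y$ (carrier wavelength $\lambda$) and a user, where $(\beta_1,\beta_2)$ are the phase-shift parameters at the surface and $\alpha_1=\sin\theta\cos\phi$, $\alpha_2=\sin\theta\sin\phi$ encode the (unknown) user direction; $\mu(\beta_1,\beta_2)$ is the expected received power $\mathbb{E}|\sqrt{P}H(\beta_1,\beta_2)+\zeta|^2$ when a pilot of power $P$ is sent and $\zeta$ is zero-mean complex Gaussian noise of variance $\sigma^2$. *)

theory Defs
  imports Complex_Main
begin

definition sinc :: "real \<Rightarrow> real" where
  "sinc x = (if x = 0 then 1 else sin x / x)"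

definition chanH :: "real \<Rightarrow> real \<Rightarrow> real \<Rightarrow> real \<Rightarrow> real \<Rightarrow> complex \<Rightarrow> real \<Rightarrow> real \<Rightarrow> complex" where
  "chanH lam Lx Ly a1 a2 C b1 b2 =
     C * complex_of_real (sinc ((Lx / lam) * pi * (a1 - b1)))
       * complex_of_real (sinc ((Ly / lam) * pi * (a2 - b2)))"

definition mu :: "real \<Rightarrow> real \<Rightarrow> real \<Rightarrow> real \<Rightarrow> real \<Rightarrow> complex \<Rightarrow> real \<Rightarrow> real \<Rightarrow> real \<Rightarrow> real \<Rightarrow> real" where
  "mu lam Lx Ly a1 a2 C P sigma2 b1 b2 =
     (cmod (complex_of_real (sqrt P) * chanH lam Lx Ly a1 a2 C b1 b2))^2 + sigma2"

text \<open>Candidate estimates alpha^(i), i = 1..4, of one coordinate, given the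
  centre b0, the step v, and the noise-removed powers m0 = mu(centre) - sigma^2,
  mp = mu(centre + step) - sigma^2, mm = mu(centre - step) - sigma^2.
  (1)/(2): b0 + v/(1 +- sqrt|m0/mp|);  (3)/(4): b0 - v/(1 +- sqrt|m0/mm|).\<close>
definition cand :: "real \<Rightarrow> real \<Rightarrow> real \<Rightarrow> real \<Rightarrow> real \<Rightarrow> nat \<Rightarrow> real" where
  "cand b0 v m0 mp mm i =
     (if i = 1 then b0 + v / (1 + sqrt \<bar>m0 / mp\<bar>)
      else if i = 2 then b0 + v / (1 - sqrt \<bar>m0 / mp\<bar>)
      else if i = 3 then b0 - v / (1 + sqrt \<bar>m0 / mm\<bar>)
      else b0 - v / (1 - sqrt \<bar>m0 / mm\<bar>))"

definition min_pair :: "(nat \<Rightarrow> real) \<Rightarrow> nat \<Rightarrow> nat \<Rightarrow> bool" where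
  "min_pair a i j \<longleftrightarrow> (i, j) \<in> {1,2} \<times> {3,4} \<and>
     (\<forall>(i', j') \<in> {1,2} \<times> {3,4}. \<bar>a i - a j\<bar> \<le> \<bar>a i' - a j'\<bar>)"

end

theory Submission
  imports Defs
begin

(*
  Along each axis the noise-free power is c * sinc^2 (K pi (alpha - beta)).  Since K v is an
  integer, moving beta by +-v changes sin only by a sign, so with t = alpha - beta0 the power
  ratios are m0 / m(beta0 +- v) = ((t -+ v) / t)^2.  Each ratio determines t up to one spurious
  second solution; the candidates (1),(2) and (3),(4) therefore both contain alpha, while their
  spurious members differ.  So the closest pair is (alpha, alpha), its midpoint is alpha, and
  alpha is the unique maximiser of mu because |sinc x| < 1 for x ~= 0.
*)

lemma abs_sin_less_abs:
  fixes x :: real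
  assumes "x \<noteq> 0"
  shows "\<bar>sin x\<bar> < \<bar>x\<bar>"
proof (cases "sin (x / 2) = 0")
  case True
  then show ?thesis
    using sin_double[of "x / 2"] assms by simp
next
  case False
  have "(cos (x / 2))\<^sup>2 < 1"
    using False by (simp add: cos_squared_eq)
  then have "\<bar>cos (x / 2)\<bar> < 1"
    by (simp add: abs_square_less_1)
  have "\<bar>sin x\<bar> = 2 * \<bar>sin (x / 2)\<bar> * \<bar>cos (x / 2)\<bar>"
    using sin_double[of "x / 2"] by (simp add: abs_mult)
  also have "\<dots> < 2 * \<bar>sin (x / 2)\<bar>"
    using \<open>\<bar>cos (x / 2)\<bar> < 1\<close> False by simp
  also have "\<dots> \<le> \<bar>x\<bar>"
    using abs_sin_x_le_abs_x[of "x / 2"] by simp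
  finally show ?thesis .
qed

lemma sinc_0 [simp]: "sinc 0 = 1"
  by (simp add: sinc_def)

lemma abs_sinc_le_1: "\<bar>sinc x\<bar> \<le> 1"
  using abs_sin_x_le_abs_x[of x] by (simp add: sinc_def divide_le_eq_1)

lemma abs_sinc_eq_1_iff: "\<bar>sinc x\<bar> = 1 \<longleftrightarrow> x = 0"
  using abs_sin_less_abs[of x] by (auto simp: sinc_def)

lemma sinc_square_le_1: "(sinc x)\<^sup>2 \<le> 1"
  using abs_sinc_le_1 by (simp add: abs_square_le_1)

lemma sinc_square_eq_1_iff: "(sinc x)\<^sup>2 = 1 \<longleftrightarrow> x = 0"
  using abs_sinc_eq_1_iff[of x] by (auto simp: power2_eq_1_iff)

lemma sinc_eq_0_iff: "sinc x = 0 \<longleftrightarrow> sin x = 0 \<and> x \<noteq> 0"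
  by (simp add: sinc_def)

lemma sinc_squares_le_1: "(sinc x)\<^sup>2 * (sinc y)\<^sup>2 \<le> 1"
  by (rule mult_le_one) (simp_all add: sinc_square_le_1)

lemma sinc_squares_eq_1_iff: "(sinc x)\<^sup>2 * (sinc y)\<^sup>2 = 1 \<longleftrightarrow> x = 0 \<and> y = 0"
proof
  assume prod: "(sinc x)\<^sup>2 * (sinc y)\<^sup>2 = 1"
  have "(sinc x)\<^sup>2 * (sinc y)\<^sup>2 \<le> (sinc x)\<^sup>2"
    by (rule mult_left_le) (simp_all add: sinc_square_le_1)
  then have "(sinc x)\<^sup>2 = 1"
    using prod sinc_square_le_1[of x] by linarith
  with prod have "(sinc y)\<^sup>2 = 1"
    by simp
  with \<open>(sinc x)\<^sup>2 = 1\<close> show "x = 0 \<and> y = 0"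
    by (simp add: sinc_square_eq_1_iff)
qed simp

lemma sin_square_add_int_pi:
  assumes "k \<in> \<int>"
  shows "(sin (x + k * pi))\<^sup>2 = (sin x)\<^sup>2"
proof -
  have "sin (k * pi) = 0"
    using assms by (simp add: sin_times_pi_eq_0)
  then have "(cos (k * pi))\<^sup>2 = 1"
    by (simp add: cos_squared_eq)
  with \<open>sin (k * pi) = 0\<close> show ?thesis
    by (simp add: sin_add power_mult_distrib)
qed

lemma sinc_square_ratio_add_int_pi:
  assumes "k \<in> \<int>" and "sin x \<noteq> 0"
  shows "(sinc x)\<^sup>2 / (sinc (x + k * pi))\<^sup>2 = ((x + k * pi) / x)\<^sup>2"
proof -
  have sin_shift: "(sin (x + k * pi))\<^sup>2 = (sin x)\<^sup>2"
    using assms(1) by (rule sin_square_add_int_pi)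
  then have "sin (x + k * pi) \<noteq> 0"
    using assms(2) by auto
  then have "x \<noteq> 0" "x + k * pi \<noteq> 0"
    using assms(2) by auto
  then show ?thesis
    using assms(2) sin_shift by (simp add: sinc_def power_divide field_simps)
qed

lemma sqrt_ratio_scaled_sinc_squares:
  assumes "K \<noteq> 0" and "K * s \<in> \<int>" and "sin (K * pi * t) \<noteq> 0" and "c \<noteq> 0"
  shows "sqrt \<bar>c * (sinc (K * pi * t))\<^sup>2 / (c * (sinc (K * pi * (t + s)))\<^sup>2)\<bar> = \<bar>t + s\<bar> / \<bar>t\<bar>"
proof -
  have "K * pi * (t + s) = K * pi * t + (K * s) * pi"
    by (simp add: algebra_simps)
  then have "(sinc (K * pi * t))\<^sup>2 / (sinc (K * pi * (t + s)))\<^sup>2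
      = ((K * pi * (t + s)) / (K * pi * t))\<^sup>2"
    using sinc_square_ratio_add_int_pi[OF assms(2,3)] by simp
  also have "\<dots> = ((t + s) / t)\<^sup>2"
    using assms(1) by simp
  finally show ?thesis
    using assms(4) by (simp add: real_sqrt_abs abs_divide)
qed

(* v / (1 +- r) solve |s - v| / |s| = r; for r = |t - v| / |t| they are t and v t / (2 t - v),
   both sides taking the junk value 0 when 2 t = v. *)
lemma divide_one_pm_distance_ratio:
  fixes t v :: real
  assumes "v > 0" and "t \<noteq> 0"
  shows "{v / (1 + \<bar>t - v\<bar> / \<bar>t\<bar>), v / (1 - \<bar>t - v\<bar> / \<bar>t\<bar>)} = {t, v * t / (2 * t - v)}"
proof -
  have ratio: "\<bar>t - v\<bar> / \<bar>t\<bar> = \<bar>(t - v) / t\<bar>"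
    by (simp add: abs_divide)
  show ?thesis
  proof (cases "(t - v) / t \<le> 0")
    case True
    then have plus: "1 + \<bar>t - v\<bar> / \<bar>t\<bar> = v / t"
      and minus: "1 - \<bar>t - v\<bar> / \<bar>t\<bar> = (2 * t - v) / t"
      unfolding ratio using assms(2) by (simp_all add: diff_divide_distrib)
    show ?thesis
      unfolding plus minus using assms(1) by simp
  next
    case False
    then have plus: "1 + \<bar>t - v\<bar> / \<bar>t\<bar> = (2 * t - v) / t"
      and minus: "1 - \<bar>t - v\<bar> / \<bar>t\<bar> = v / t"
      unfolding ratio using assms(2) by (simp_all add: diff_divide_distrib)
    have "{v * t / (2 * t - v), t} = {t, v * t / (2 * t - v)}"
      by (rule insert_commute)
    then show ?thesis
      unfolding plus minus using assms(1) by simp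
  qed
qed

lemma min_pair_at_common_value:
  assumes pair12: "{a 1, a 2} = {x, p}" and pair34: "{a 3, a 4} = {x, q}" and "p \<noteq> q"
    and "min_pair a i j"
  shows "a i = x \<and> a j = x"
proof -
  have ij: "i \<in> {1, 2}" "j \<in> {3, 4}"
    and minimal: "\<And>i' j'. i' \<in> {1, 2} \<Longrightarrow> j' \<in> {3, 4} \<Longrightarrow> \<bar>a i - a j\<bar> \<le> \<bar>a i' - a j'\<bar>"
    using assms(4) unfolding min_pair_def by auto
  have "x \<in> {a 1, a 2}" "x \<in> {a 3, a 4}"
    unfolding pair12 pair34 by simp_all
  then have "\<exists>i' \<in> {1, 2}. a i' = x" "\<exists>j' \<in> {3, 4}. a j' = x"
    by auto
  then obtain i' j' where "i' \<in> {1, 2}" "a i' = x" and "j' \<in> {3, 4}" "a j' = x"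
    by blast
  then have "a i = a j"
    using minimal by fastforce
  moreover have "a i \<in> {x, p}" "a j \<in> {x, q}"
    using ij unfolding pair12[symmetric] pair34[symmetric] by auto
  ultimately show ?thesis
    using assms(3) by auto
qed

lemma cand_plus_pair:
  assumes "v > 0" and "t \<noteq> 0" and "sqrt \<bar>m0 / mp\<bar> = \<bar>t - v\<bar> / \<bar>t\<bar>"
  shows "{cand b0 v m0 mp mm 1, cand b0 v m0 mp mm 2} = {b0 + t, b0 + v * t / (2 * t - v)}"
proof -
  have "{cand b0 v m0 mp mm 1, cand b0 v m0 mp mm 2} =
      (\<lambda>s. b0 + s) ` {v / (1 + \<bar>t - v\<bar> / \<bar>t\<bar>), v / (1 - \<bar>t - v\<bar> / \<bar>t\<bar>)}"
    using assms(3) by (simp add: cand_def)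
  then show ?thesis
    unfolding divide_one_pm_distance_ratio[OF assms(1,2)] by simp
qed

lemma cand_minus_pair:
  assumes "v > 0" and "t \<noteq> 0" and "sqrt \<bar>m0 / mm\<bar> = \<bar>t + v\<bar> / \<bar>t\<bar>"
  shows "{cand b0 v m0 mp mm 3, cand b0 v m0 mp mm 4} = {b0 + t, b0 - v * t / (2 * t + v)}"
proof -
  have neg_t: "- t \<noteq> 0"
    using assms(2) by simp
  have "2 * - t - v = - (2 * t + v)"
    by simp
  then have reflect: "v * - t / (2 * - t - v) = v * t / (2 * t + v)"
    by (simp only: mult_minus_right minus_divide_divide)
  have "\<bar>t + v\<bar> = \<bar>- t - v\<bar>"
    by simp
  then have "{cand b0 v m0 mp mm 3, cand b0 v m0 mp mm 4} =
      (\<lambda>s. b0 - s) ` {v / (1 + \<bar>- t - v\<bar> / \<bar>- t\<bar>), v / (1 - \<bar>- t - v\<bar> / \<bar>- t\<bar>)}"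
    using assms(3) by (simp add: cand_def)
  also have "\<dots> = {b0 + t, b0 - v * t / (2 * t + v)}"
    unfolding divide_one_pm_distance_ratio[OF assms(1) neg_t]
    by (simp only: image_insert image_empty reflect diff_minus_eq_add)
  finally show ?thesis .
qed

lemma reflected_steps_differ:
  fixes t v :: real
  assumes "v > 0" and "t \<noteq> 0"
  shows "v * t / (2 * t - v) \<noteq> - (v * t / (2 * t + v))"
proof
  assume eq: "v * t / (2 * t - v) = - (v * t / (2 * t + v))"
  consider "2 * t - v = 0" | "2 * t + v = 0" | "2 * t - v \<noteq> 0" "2 * t + v \<noteq> 0"
    by blast
  then show False
  proof cases
    case 1
    then show False
      using eq assms by simp
  next
    case 2
    then show False
      using eq assms by simp
  next
    case 3
    then have "v * t * (2 * t + v) + v * t * (2 * t - v) = 0"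
      using eq by (simp add: field_simps)
    then have "4 * v * t * t = 0"
      by (simp add: algebra_simps)
    then show False
      using assms by simp
  qed
qed

lemma cand_midpoint_of_min_pair:
  fixes f :: "real \<Rightarrow> real" and b0 v :: real
  defines "al \<equiv> cand b0 v (f b0) (f (b0 + v)) (f (b0 - v))"
  assumes "K > 0" and "v > 0" and "K * v \<in> \<nat>"
    and f: "\<And>x. f x = c * (sinc (K * pi * (a - x)))\<^sup>2"
    and plus_nonzero: "f (b0 + v) \<noteq> 0" and minus_nonzero: "f (b0 - v) \<noteq> 0"
    and "min_pair al i j"
  shows "(al i + al j) / 2 = a"
proof -
  define t where "t = a - b0"
  have f_shift: "f (b0 + s) = c * (sinc (K * pi * (t + - s)))\<^sup>2" for s
    unfolding f t_def by (simp add: algebra_simps)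
  have "c \<noteq> 0"
    using plus_nonzero f by auto
  have Kv_int: "K * v \<in> \<int>" "K * - v \<in> \<int>"
    using \<open>K * v \<in> \<nat>\<close> Nats_subset_Ints by auto
  \<comment> \<open>otherwise sin would vanish at both shifted points, where sinc is nonzero only at 0\<close>
  have "sin (K * pi * t) \<noteq> 0"
  proof
    assume "sin (K * pi * t) = 0"
    then have zero_shift: "sin (K * pi * (t + s)) = 0" if "K * s \<in> \<int>" for s
      using sin_square_add_int_pi[OF that, of "K * pi * t"] by (simp add: algebra_simps)
    have "sin (K * pi * (t + - v)) = 0" "sin (K * pi * (t + v)) = 0"
      using zero_shift[OF Kv_int(2)] zero_shift[OF Kv_int(1)] .
    moreover have "sinc (K * pi * (t + - v)) \<noteq> 0" "sinc (K * pi * (t + v)) \<noteq> 0"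
      using plus_nonzero minus_nonzero f_shift[of v] f_shift[of "- v"] by auto
    ultimately have "K * pi * (t + - v) = 0" "K * pi * (t + v) = 0"
      by (simp_all add: sinc_eq_0_iff)
    then show False
      using \<open>K > 0\<close> \<open>v > 0\<close> by simp
  qed
  then have "t \<noteq> 0"
    by auto
  have "sqrt \<bar>f b0 / f (b0 + v)\<bar> = \<bar>t - v\<bar> / \<bar>t\<bar>"
    using sqrt_ratio_scaled_sinc_squares[OF _ Kv_int(2) \<open>sin (K * pi * t) \<noteq> 0\<close> \<open>c \<noteq> 0\<close>]
      f_shift[of 0] f_shift[of v] \<open>K > 0\<close> by simp
  from cand_plus_pair[OF \<open>v > 0\<close> \<open>t \<noteq> 0\<close> this]
  have plus_pair: "{al 1, al 2} = {a, b0 + v * t / (2 * t - v)}"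
    unfolding al_def t_def by simp
  have "sqrt \<bar>f b0 / f (b0 - v)\<bar> = \<bar>t + v\<bar> / \<bar>t\<bar>"
    using sqrt_ratio_scaled_sinc_squares[OF _ Kv_int(1) \<open>sin (K * pi * t) \<noteq> 0\<close> \<open>c \<noteq> 0\<close>]
      f_shift[of 0] f_shift[of "- v"] \<open>K > 0\<close> by simp
  from cand_minus_pair[OF \<open>v > 0\<close> \<open>t \<noteq> 0\<close> this]
  have minus_pair: "{al 3, al 4} = {a, b0 - v * t / (2 * t + v)}"
    unfolding al_def t_def by simp
  have "b0 + v * t / (2 * t - v) \<noteq> b0 - v * t / (2 * t + v)"
    using reflected_steps_differ[OF \<open>v > 0\<close> \<open>t \<noteq> 0\<close>] by simp
  from min_pair_at_common_value[OF plus_pair minus_pair this \<open>min_pair al i j\<close>]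
  show ?thesis
    by simp
qed

lemma mu_eq:
  assumes "P \<ge> 0"
  shows "mu lam Lx Ly a1 a2 C P sigma2 x y =
    P * (cmod C)\<^sup>2 * ((sinc (Lx / lam * pi * (a1 - x)))\<^sup>2 * (sinc (Ly / lam * pi * (a2 - y)))\<^sup>2)
      + sigma2"
  using assms unfolding mu_def chanH_def by (simp add: norm_mult power_mult_distrib)

lemma mu_le_mu_at_direction:
  assumes "P \<ge> 0"
  shows "mu lam Lx Ly a1 a2 C P sigma2 x y \<le> mu lam Lx Ly a1 a2 C P sigma2 a1 a2"
  using mult_left_mono[OF sinc_squares_le_1, of "P * (cmod C)\<^sup>2"] assms
  by (simp add: mu_eq)

lemma mu_eq_mu_at_direction_iff:
  assumes "lam > 0" "Lx > 0" "Ly > 0" "C \<noteq> 0" "P > 0"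
  shows "mu lam Lx Ly a1 a2 C P sigma2 x y = mu lam Lx Ly a1 a2 C P sigma2 a1 a2 \<longleftrightarrow>
    x = a1 \<and> y = a2"
  using assms by (auto simp: mu_eq sinc_squares_eq_1_iff)

theorem theorem1:
  fixes lam Lx Ly a1 a2 P sigma2 b10 b20 v w :: real and C :: complex
    and i1 j1 i2 j2 :: nat
  defines "M \<equiv> mu lam Lx Ly a1 a2 C P sigma2"
  assumes "lam > 0" "Lx > 0" "Ly > 0"
    and "a1 \<in> {-1..1}" "a2 \<in> {-1..1}"
    and "C \<noteq> 0" "P > 0" "sigma2 > 0"
    and "b10 \<in> {-1..1}" "b20 \<in> {-1..1}"
    and "v > 0" "w > 0"
    and "(Lx / lam) * v \<in> \<nat>" "(Ly / lam) * w \<in> \<nat>"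
    and "\<bar>b10 + v\<bar> \<le> 1" "\<bar>b10 - v\<bar> \<le> 1"
    and "\<bar>b20 + w\<bar> \<le> 1" "\<bar>b20 - w\<bar> \<le> 1"
    and "M (b10 + v) b20 - sigma2 \<noteq> 0" "M (b10 - v) b20 - sigma2 \<noteq> 0"
    and "M b10 (b20 + w) - sigma2 \<noteq> 0" "M b10 (b20 - w) - sigma2 \<noteq> 0"
    and "min_pair (cand b10 v (M b10 b20 - sigma2) (M (b10 + v) b20 - sigma2)
                        (M (b10 - v) b20 - sigma2)) i1 j1"
    and "min_pair (cand b20 w (M b10 b20 - sigma2) (M b10 (b20 + w) - sigma2)
                        (M b10 (b20 - w) - sigma2)) i2 j2"
  shows "let al1 = cand b10 v (M b10 b20 - sigma2) (M (b10 + v) b20 - sigma2)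
                        (M (b10 - v) b20 - sigma2);
             al2 = cand b20 w (M b10 b20 - sigma2) (M b10 (b20 + w) - sigma2)
                        (M b10 (b20 - w) - sigma2);
             s1 = (al1 i1 + al1 j1) / 2;
             s2 = (al2 i2 + al2 j2) / 2
         in s1 \<in> {-1..1} \<and> s2 \<in> {-1..1} \<and>
            (\<forall>x\<in>{-1..1}. \<forall>y\<in>{-1..1}. M x y \<le> M s1 s2) \<and>
            (\<forall>x\<in>{-1..1}. \<forall>y\<in>{-1..1}. M x y = M s1 s2 \<longrightarrow> x = s1 \<and> y = s2)"
proof -
  let ?c = "P * (cmod C)\<^sup>2"
  have M_eq: "M x y =
      ?c * ((sinc (Lx / lam * pi * (a1 - x)))\<^sup>2 * (sinc (Ly / lam * pi * (a2 - y)))\<^sup>2) + sigma2" for x y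
    unfolding M_def using \<open>P > 0\<close> by (simp add: mu_eq)
  have row: "M x b20 - sigma2 =
      ?c * (sinc (Ly / lam * pi * (a2 - b20)))\<^sup>2 * (sinc (Lx / lam * pi * (a1 - x)))\<^sup>2" for x
    unfolding M_eq by (simp add: mult_ac)
  have column: "M b10 y - sigma2 =
      ?c * (sinc (Lx / lam * pi * (a1 - b10)))\<^sup>2 * (sinc (Ly / lam * pi * (a2 - y)))\<^sup>2" for y
    unfolding M_eq by (simp add: mult_ac)
  define al1 where
    "al1 = cand b10 v (M b10 b20 - sigma2) (M (b10 + v) b20 - sigma2) (M (b10 - v) b20 - sigma2)"
  define al2 where
    "al2 = cand b20 w (M b10 b20 - sigma2) (M b10 (b20 + w) - sigma2) (M b10 (b20 - w) - sigma2)"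
  have "Lx / lam > 0" "Ly / lam > 0"
    using \<open>lam > 0\<close> \<open>Lx > 0\<close> \<open>Ly > 0\<close> by simp_all
  then have "(al1 i1 + al1 j1) / 2 = a1" "(al2 i2 + al2 j2) / 2 = a2"
    using cand_midpoint_of_min_pair[OF _ \<open>v > 0\<close> _ row]
      cand_midpoint_of_min_pair[OF _ \<open>w > 0\<close> _ column] assms
    unfolding al1_def al2_def by simp_all
  moreover have "M x y \<le> M a1 a2" "M x y = M a1 a2 \<longleftrightarrow> x = a1 \<and> y = a2" for x y
    unfolding M_def using \<open>lam > 0\<close> \<open>Lx > 0\<close> \<open>Ly > 0\<close> \<open>C \<noteq> 0\<close> \<open>P > 0\<close>
    by (simp_all add: mu_le_mu_at_direction mu_eq_mu_at_direction_iff)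
  ultimately show ?thesis
    unfolding Let_def al1_def[symmetric] al2_def[symmetric]
    using \<open>a1 \<in> {-1..1}\<close> \<open>a2 \<in> {-1..1}\<close> by auto
qed

end
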